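(* Let $q$ be a prime power. Then \[ \ell(2,3,q)\leq 2\sqrt{(q+1)\ln (q+1)}+2 . \]
   Context: For integers $R,r\ge 1$ and a prime power $q$, the length function $\ell(R,r,q)$ is the smallest length $n$ of a linear code over $\mathbb{F}_q$ of length $n$, codimension $r$ (i.e. dimension $n-r$) and covering radius $R$. Here $\ln$ denotes the natural logarithm. *)

theory Defs
  imports Complex_Main "HOL-Library.Function_Algebras"
begin

text \<open>Words of length n over a field 'a are modelled as functions nat => 'a
  vanishing outside {0..<n}; this set is the vector space 'a^n.\<close>

definition words :: "nat \<Rightarrow> (nat \<Rightarrow> 'a::field) set" where
  "words n = {x. \<forall>i\<ge>n. x i = 0}"

definition vscale :: "'a::field \<Rightarrow> (nat \<Rightarrow> 'a) \<Rightarrow> (nat \<Rightarrow> 'a)" where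
  "vscale c x = (\<lambda>i. c * x i)"

definition hamming_dist :: "nat \<Rightarrow> (nat \<Rightarrow> 'a) \<Rightarrow> (nat \<Rightarrow> 'a) \<Rightarrow> nat" where
  "hamming_dist n x y = card {i. i < n \<and> x i \<noteq> y i}"

definition linear_code :: "nat \<Rightarrow> nat \<Rightarrow> (nat \<Rightarrow> 'a::field) set \<Rightarrow> bool" where
  "linear_code n r C \<longleftrightarrow> r \<le> n \<and> C \<subseteq> words n \<and>
     module.subspace vscale C \<and> vector_space.dim vscale C = n - r"

definition has_covering_radius :: "nat \<Rightarrow> (nat \<Rightarrow> 'a::field) set \<Rightarrow> nat \<Rightarrow> bool" where
  "has_covering_radius n C R \<longleftrightarrow>
     (\<forall>x\<in>words n. \<exists>c\<in>C. hamming_dist n x c \<le> R) \<and>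
     (\<exists>x\<in>words n. \<forall>c\<in>C. R \<le> hamming_dist n x c)"

text \<open>The length function l(R,r,q), with q = CARD('a) for a finite field 'a.\<close>

definition length_fun :: "'a::{field,finite} itself \<Rightarrow> nat \<Rightarrow> nat \<Rightarrow> nat" where
  "length_fun _ R r = (LEAST n. \<exists>C :: (nat \<Rightarrow> 'a) set.
       linear_code n r C \<and> has_covering_radius n C R)"

end

theory Submission
  imports Defs "HOL-Library.Product_Plus" "HOL-Library.Cardinality"
begin

text \<open>A linear code of codimension 3 and covering radius 2 is the kernel of a 3 x n matrix whose
  set S of columns in F_q^3 contains the unit vectors, such that every vector of F_q^3 is a linear
  combination of two columns but not every vector is a multiple of a single column.
  Such an S is built greedily: an uncovered vector z is covered by insert p S for at least
  (q - 1) |multiples S| of the q^3 candidates p, so some p shrinks the set of uncovered vectors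
  by the factor 1 - (q - 1) |multiples S| / q^3, while |multiples S| grows by q - 1 per step.
  Uncovered vectors come in classes of q - 1 nonzero multiples, so none is left once fewer than
  q - 1 remain; for q \<ge> 20, estimating the product of the factors by an exponential shows that
  this happens after at most 2 sqrt((q + 1) ln(q + 1)) + 2 steps, and for smaller q the product
  is evaluated directly.\<close>

section \<open>Multiples and two-term combinations of triples\<close>

type_synonym 'a triple = "'a \<times> 'a \<times> 'a"

fun tscale :: "'a::field \<Rightarrow> 'a triple \<Rightarrow> 'a triple" where
  "tscale c (x, y, z) = (c * x, c * y, c * z)"

lemma zero_triple: "(0 :: 'a::zero triple) = (0, 0, 0)"
  by (simp add: zero_prod_def)

lemma tscale_add_right: "tscale c (u + v) = tscale c u + tscale c v"
  by (cases u; cases v) (simp add: algebra_simps)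

lemma tscale_add_left: "tscale (a + b) u = tscale a u + tscale b u"
  by (cases u) (simp add: algebra_simps)

lemma tscale_diff_left: "tscale (a - b) u = tscale a u - tscale b u"
  by (cases u) (simp add: algebra_simps)

lemma tscale_diff_right: "tscale c (u - v) = tscale c u - tscale c v"
  by (cases u; cases v) (simp add: algebra_simps)

lemma tscale_uminus_left: "tscale (- a) u = - tscale a u"
  by (cases u) simp

lemma tscale_uminus_right: "tscale c (- u) = - tscale c u"
  by (cases u) simp

lemma tscale_tscale: "tscale a (tscale b u) = tscale (a * b) u"
  by (cases u) (simp add: mult.assoc)

lemma tscale_one [simp]: "tscale 1 u = u"
  by (cases u) simp

lemma tscale_zero_left [simp]: "tscale 0 u = 0"
  by (cases u) (simp add: zero_triple)

lemma tscale_zero_right [simp]: "tscale c 0 = 0"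
  by (simp add: zero_triple)

lemma tscale_cancel_left: "c \<noteq> 0 \<Longrightarrow> tscale c u = v \<longleftrightarrow> u = tscale (1 / c) v"
  by (auto simp: tscale_tscale)

lemma inj_tscale_left: "u \<noteq> 0 \<Longrightarrow> inj (\<lambda>c. tscale c u)"
  by (rule injI) (cases u, auto simp: zero_triple)

definition multiples :: "'a::field triple set \<Rightarrow> 'a triple set" where
  "multiples S = {tscale c u | c u. u \<in> S}"

lemma tscale_mem_multiples: "u \<in> S \<Longrightarrow> tscale c u \<in> multiples S"
  unfolding multiples_def by blast

lemma zero_mem_multiples: "S \<noteq> {} \<Longrightarrow> 0 \<in> multiples S"
  using tscale_mem_multiples[of _ S 0] by auto

lemma multiples_tscale_closed:
  assumes "v \<in> multiples S" shows "tscale c v \<in> multiples S"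
proof -
  obtain b u where "u \<in> S" "v = tscale b u" using assms unfolding multiples_def by blast
  then show ?thesis by (simp add: tscale_tscale tscale_mem_multiples)
qed

lemma tscale_mem_multiples_iff: "c \<noteq> 0 \<Longrightarrow> tscale c v \<in> multiples S \<longleftrightarrow> v \<in> multiples S"
  using multiples_tscale_closed[of "tscale c v" S "1 / c"] multiples_tscale_closed[of v S c]
  by (auto simp: tscale_tscale)

lemma subset_multiples: "S \<subseteq> multiples S"
  using tscale_mem_multiples[of _ S 1] by auto

definition pair_combinations :: "'a::field triple set \<Rightarrow> 'a triple set" where
  "pair_combinations S = {tscale a u + tscale b w | a b u w. u \<in> S \<and> w \<in> S}"

lemma pair_combinations_mono: "S \<subseteq> T \<Longrightarrow> pair_combinations S \<subseteq> pair_combinations T"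
  unfolding pair_combinations_def by blast

lemma zero_mem_pair_combinations:
  assumes "u \<in> S" shows "0 \<in> pair_combinations S"
proof -
  have "0 = tscale 0 u + tscale 0 u" by simp
  with assms show ?thesis unfolding pair_combinations_def by blast
qed

lemma pair_combinations_insert_multiple:
  assumes "p \<in> multiples S"
  shows "pair_combinations (insert p S) = pair_combinations S"
proof
  obtain c u where "u \<in> S" and p: "p = tscale c u" using assms unfolding multiples_def by blast
  have absorb: "\<exists>x'\<in>S. \<exists>a'. tscale a x = tscale a' x'" if "x \<in> insert p S" for a x
    using that \<open>u \<in> S\<close> by (metis insert_iff p tscale_tscale)
  show "pair_combinations (insert p S) \<subseteq> pair_combinations S"
  proof
    fix z assume "z \<in> pair_combinations (insert p S)"
    then obtain a b x y where "x \<in> insert p S" "y \<in> insert p S" and z: "z = tscale a x + tscale b y"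
      unfolding pair_combinations_def by blast
    with absorb obtain x' y' a' b' where "x' \<in> S" "y' \<in> S"
      and "tscale a x = tscale a' x'" "tscale b y = tscale b' y'" by metis
    then have "z = tscale a' x' + tscale b' y'" by (simp add: z)
    with \<open>x' \<in> S\<close> \<open>y' \<in> S\<close> show "z \<in> pair_combinations S"
      unfolding pair_combinations_def by blast
  qed
qed (rule pair_combinations_mono, blast)

definition uncovered :: "'a::field triple set \<Rightarrow> 'a triple set" where
  "uncovered S = - pair_combinations S"

lemma tscale_mem_uncovered:
  assumes "z \<in> uncovered S" and "c \<noteq> 0"
  shows "tscale c z \<in> uncovered S"
  unfolding uncovered_def
proof
  assume "tscale c z \<in> pair_combinations S"
  then obtain a b u w where "u \<in> S" "w \<in> S" and "tscale c z = tscale a u + tscale b w"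
    unfolding pair_combinations_def by blast
  then have "z = tscale (a / c) u + tscale (b / c) w"
    using assms(2) by (simp add: tscale_cancel_left tscale_add_right tscale_tscale)
  with \<open>u \<in> S\<close> \<open>w \<in> S\<close> have "z \<in> pair_combinations S"
    unfolding pair_combinations_def by blast
  with assms(1) show False by (simp add: uncovered_def)
qed

lemma inj_on_tscale_plus_multiples:
  fixes S :: "'a::field triple set"
  assumes z: "z \<in> uncovered S"
  shows "inj_on (\<lambda>(a, w). tscale a z + w) ((UNIV - {0}) \<times> multiples S)"
proof (rule inj_onI)
  fix x y assume "x \<in> (UNIV - {0 :: 'a}) \<times> multiples S" "y \<in> (UNIV - {0 :: 'a}) \<times> multiples S"
    and eq_xy: "(\<lambda>(a, w). tscale a z + w) x = (\<lambda>(a, w). tscale a z + w) y"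
  then obtain a w a' w' where xy: "x = (a, w)" "y = (a', w')"
    and "w \<in> multiples S" "w' \<in> multiples S" by blast
  then obtain b u b' u' where "u \<in> S" "u' \<in> S" and w: "w = tscale b u" "w' = tscale b' u'"
    unfolding multiples_def by blast
  have eq: "tscale a z + w = tscale a' z + w'" using eq_xy xy by simp
  show "x = y"
  proof (cases "a = a'")
    case True
    then show ?thesis using eq xy by simp
  next
    case False
    have "tscale (a - a') z = w' - w"
      using eq by (simp add: tscale_diff_left algebra_simps eq_diff_eq diff_eq_eq)
    then have "z = tscale (1 / (a - a')) (w' - w)"
      using False by (simp add: tscale_cancel_left)
    also have "\<dots> = tscale (b' / (a - a')) u' + tscale (- b / (a - a')) u"
      by (simp add: w tscale_diff_right tscale_tscale tscale_uminus_left)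
    finally have "z \<in> pair_combinations S"
      using \<open>u \<in> S\<close> \<open>u' \<in> S\<close> unfolding pair_combinations_def by blast
    with z show ?thesis by (simp add: uncovered_def)
  qed
qed

section \<open>Codes with a prescribed parity-check matrix\<close>

interpretation word: vector_space "vscale :: 'a::field \<Rightarrow> (nat \<Rightarrow> 'a) \<Rightarrow> (nat \<Rightarrow> 'a)"
  by unfold_locales (simp_all add: vscale_def fun_eq_iff algebra_simps)

lemma sum_fun_apply: "(\<Sum>a\<in>A. f a) i = (\<Sum>a\<in>A. f a i)"
  by (induction A rule: infinite_finite_induct) auto

definition single :: "nat \<Rightarrow> 'a::zero \<Rightarrow> nat \<Rightarrow> 'a" where
  "single i a = (\<lambda>l. if l = i then a else 0)"

lemma words_add: "x \<in> words n \<Longrightarrow> y \<in> words n \<Longrightarrow> x + y \<in> words n"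
  by (simp add: words_def)

lemma words_diff: "x \<in> words n \<Longrightarrow> y \<in> words n \<Longrightarrow> x - y \<in> words n"
  by (simp add: words_def)

lemma words_vscale: "x \<in> words n \<Longrightarrow> vscale c x \<in> words n"
  by (simp add: words_def vscale_def)

lemma words_single: "i < n \<Longrightarrow> single i a \<in> words n"
  by (simp add: words_def single_def)

lemma hamming_dist_le_Suc0_imp_single_support:
  assumes "hamming_dist n x y \<le> 1"
  obtains i where "\<forall>l<n. l \<noteq> i \<longrightarrow> x l = y l"
proof -
  define D where "D = {l. l < n \<and> x l \<noteq> y l}"
  have "card D \<le> 1" "finite D" using assms by (simp_all add: hamming_dist_def D_def)
  then consider "D = {}" | i where "D = {i}" by (auto simp: card_le_Suc0_iff_eq)
  then show thesis by cases (use that in \<open>auto simp: D_def\<close>)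
qed

lemma hamming_dist_diff_two_singles:
  fixes x :: "nat \<Rightarrow> 'a::ab_group_add"
  shows "hamming_dist n x (x - single i a - single j b) \<le> 2"
proof -
  have "{l. l < n \<and> x l \<noteq> (x - single i a - single j b) l} \<subseteq> {i, j}"
    by (auto simp: single_def)
  then have "hamming_dist n x (x - single i a - single j b) \<le> card {i, j}"
    unfolding hamming_dist_def by (rule card_mono[rotated]) simp
  also have "\<dots> \<le> 2" by (simp add: card_insert_le_m1)
  finally show ?thesis .
qed

definition syndrome :: "nat \<Rightarrow> (nat \<Rightarrow> 'a triple) \<Rightarrow> (nat \<Rightarrow> 'a::field) \<Rightarrow> 'a triple" where
  "syndrome n col x = (\<Sum>l<n. tscale (x l) (col l))"

definition parity_code :: "nat \<Rightarrow> (nat \<Rightarrow> 'a triple) \<Rightarrow> (nat \<Rightarrow> 'a::field) set" where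
  "parity_code n col = {x \<in> words n. syndrome n col x = 0}"

lemma syndrome_zero: "syndrome n col 0 = 0"
  by (simp add: syndrome_def)

lemma syndrome_add: "syndrome n col (x + y) = syndrome n col x + syndrome n col y"
  by (simp add: syndrome_def tscale_add_left sum.distrib)

lemma syndrome_diff: "syndrome n col (x - y) = syndrome n col x - syndrome n col y"
  by (simp add: syndrome_def tscale_diff_left sum_subtractf)

lemma syndrome_vscale: "syndrome n col (vscale c x) = tscale c (syndrome n col x)"
  unfolding syndrome_def vscale_def
proof (induction n)
  case (Suc n)
  then show ?case by (simp add: tscale_add_right tscale_tscale)
qed simp

lemma syndrome_single_support:
  assumes "\<forall>l<n. l \<noteq> i \<longrightarrow> x l = 0"
  shows "syndrome n col x = (if i < n then tscale (x i) (col i) else 0)"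
proof -
  have "syndrome n col x = (\<Sum>l<n. if l = i then tscale (x i) (col i) else 0)"
    unfolding syndrome_def by (rule sum.cong) (use assms in auto)
  then show ?thesis by simp
qed

lemma syndrome_single: "syndrome n col (single i a) = (if i < n then tscale a (col i) else 0)"
  by (subst syndrome_single_support[of _ i]) (simp_all add: single_def)

lemma parity_code_subspace: "word.subspace (parity_code n col)"
  unfolding word.subspace_def parity_code_def
  by (auto simp: syndrome_zero syndrome_add syndrome_vscale words_add words_vscale)
    (simp add: words_def)

lemma parity_code_covering:
  assumes "pair_combinations (col ` {..<n}) = UNIV" and x: "x \<in> words n"
  shows "\<exists>c\<in>parity_code n col. hamming_dist n x c \<le> 2"
proof -
  obtain i j a b where "i < n" "j < n"
    and "syndrome n col x = tscale a (col i) + tscale b (col j)"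
    using assms(1) unfolding pair_combinations_def by blast
  then have "x - single i a - single j b \<in> parity_code n col"
    using x by (simp add: parity_code_def syndrome_diff syndrome_single words_diff words_single)
  then show ?thesis using hamming_dist_diff_two_singles by blast
qed

definition first_three :: "(nat \<Rightarrow> 'a) \<Rightarrow> 'a triple" where
  "first_three x = (x 0, x 1, x 2)"

definition embed_triple :: "'a::zero triple \<Rightarrow> nat \<Rightarrow> 'a" where
  "embed_triple v =
     (\<lambda>l. if l = 0 then fst v else if l = 1 then fst (snd v) else if l = 2 then snd (snd v) else 0)"

lemma first_three_embed_triple [simp]: "first_three (embed_triple v) = v"
  by (simp add: first_three_def embed_triple_def)

lemma first_three_sum: "first_three (\<Sum>a\<in>A. f a) = (\<Sum>a\<in>A. first_three (f a))"
  by (simp add: first_three_def sum_fun_apply sum_prod)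

lemma first_three_vscale: "first_three (vscale c x) = tscale c (first_three x)"
  by (simp add: first_three_def vscale_def)

lemma eq_iff_first_three_eq:
  "x = y \<longleftrightarrow> first_three x = first_three y \<and> (\<forall>l\<ge>3. x l = y l)"
proof (intro iffI conjI)
  assume eq: "first_three x = first_three y \<and> (\<forall>l\<ge>3. x l = y l)"
  show "x = y"
  proof
    fix l :: nat
    have "l = 0 \<or> l = 1 \<or> l = 2 \<or> 3 \<le> l" by linarith
    then show "x l = y l" using eq by (auto simp: first_three_def)
  qed
qed simp_all

text \<open>The first three columns form an identity matrix, so the parity-check matrix has rank 3.\<close>

locale standard_columns =
  fixes n :: nat and col :: "nat \<Rightarrow> 'a::field triple"
  assumes three_le: "3 \<le> n"
    and col_0: "col 0 = (1, 0, 0)" and col_1: "col 1 = (0, 1, 0)" and col_2: "col 2 = (0, 0, 1)"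
begin

lemma col_Suc_0: "col (Suc 0) = (0, 1, 0)"
  using col_1 by simp

lemma syndrome_split: "syndrome n col x = first_three x + (\<Sum>l\<in>{3..<n}. tscale (x l) (col l))"
proof -
  have "{..<n} = {0, 1, 2} \<union> {3..<n}" using three_le by auto
  then show ?thesis
    by (simp add: syndrome_def sum.union_disjoint first_three_def col_0 col_Suc_0 col_2 zero_triple)
qed

lemma syndrome_embed_triple: "syndrome n col (embed_triple v) = v"
proof -
  have "(\<Sum>l\<in>{3..<n}. tscale (embed_triple v l) (col l)) = 0"
    by (rule sum.neutral) (simp add: embed_triple_def)
  then show ?thesis by (simp add: syndrome_split)
qed

definition kernel_vector :: "nat \<Rightarrow> nat \<Rightarrow> 'a" where
  "kernel_vector j = single j 1 - embed_triple (col j)"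

lemma kernel_vector_ge_3: "3 \<le> l \<Longrightarrow> kernel_vector j l = (if l = j then 1 else 0)"
  by (simp add: kernel_vector_def single_def embed_triple_def)

lemma kernel_vector_mem: "j \<in> {3..<n} \<Longrightarrow> kernel_vector j \<in> parity_code n col"
  by (simp add: parity_code_def kernel_vector_def syndrome_diff syndrome_single
      syndrome_embed_triple)
    (simp add: words_def single_def embed_triple_def)

lemma inj_on_kernel_vector: "inj_on kernel_vector {3..<n}"
  by (rule inj_onI) (metis atLeastLessThan_iff kernel_vector_ge_3 zero_neq_one)

lemma independent_kernel_vectors: "word.independent (kernel_vector ` {3..<n})"
  unfolding word.independent_explicit_module
proof (intro allI impI)
  fix t u v
  assume t: "finite t" "t \<subseteq> kernel_vector ` {3..<n}"
    and sum0: "(\<Sum>w\<in>t. vscale (u w) w) = 0" and v: "v \<in> t"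
  obtain j where j: "j \<in> {3..<n}" "v = kernel_vector j" using t v by auto
  have "0 = (\<Sum>w\<in>t. u w * w j)"
    using fun_cong[OF sum0, of j] by (simp add: sum_fun_apply vscale_def)
  also have "\<dots> = u v * v j + (\<Sum>w\<in>t - {v}. u w * w j)" using t v by (simp add: sum.remove)
  also have "(\<Sum>w\<in>t - {v}. u w * w j) = 0"
  proof (rule sum.neutral, rule ballI)
    fix w assume w: "w \<in> t - {v}"
    then obtain i where "i \<in> {3..<n}" "w = kernel_vector i" using t by auto
    with w j show "u w * w j = 0" by (auto simp: kernel_vector_ge_3)
  qed
  finally show "u v = 0" using j by (simp add: kernel_vector_ge_3)
qed

lemma parity_code_expansion:
  assumes x: "x \<in> parity_code n col"
  shows "x = (\<Sum>j\<in>{3..<n}. vscale (x j) (kernel_vector j))"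
  unfolding eq_iff_first_three_eq
proof
  have "first_three (kernel_vector j) = - col j" if "3 \<le> j" for j
    using that by (cases "col j")
      (simp add: kernel_vector_def first_three_def single_def embed_triple_def)
  then have "first_three (\<Sum>j\<in>{3..<n}. vscale (x j) (kernel_vector j))
      = - (\<Sum>j\<in>{3..<n}. tscale (x j) (col j))"
    by (simp add: first_three_sum first_three_vscale tscale_uminus_right sum_negf)
  also have "\<dots> = first_three x"
    using x syndrome_split[of x] by (simp add: parity_code_def add_eq_0_iff2)
  finally show "first_three x = first_three (\<Sum>j\<in>{3..<n}. vscale (x j) (kernel_vector j))" ..
  show "\<forall>l\<ge>3. x l = (\<Sum>j\<in>{3..<n}. vscale (x j) (kernel_vector j)) l"
  proof (intro allI impI)
    fix l :: nat assume "3 \<le> l"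
    then have "(\<Sum>j\<in>{3..<n}. vscale (x j) (kernel_vector j)) l = (if l < n then x l else 0)"
      by (simp add: sum_fun_apply vscale_def kernel_vector_ge_3 if_distrib cong: if_cong)
    then show "x l = (\<Sum>j\<in>{3..<n}. vscale (x j) (kernel_vector j)) l"
      using x by (simp add: parity_code_def words_def)
  qed
qed

lemma dim_parity_code: "word.dim (parity_code n col) = n - 3"
proof -
  have "parity_code n col \<subseteq> word.span (kernel_vector ` {3..<n})"
  proof
    fix x assume "x \<in> parity_code n col"
    moreover have "(\<Sum>j\<in>{3..<n}. vscale (x j) (kernel_vector j))
        \<in> word.span (kernel_vector ` {3..<n})"
      by (intro word.span_sum word.span_scale word.span_base) auto
    ultimately show "x \<in> word.span (kernel_vector ` {3..<n})"
      using parity_code_expansion by metis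
  qed
  then have "card (kernel_vector ` {3..<n}) = word.dim (parity_code n col)"
    using kernel_vector_mem independent_kernel_vectors by (intro word.basis_card_eq_dim) auto
  then show ?thesis using card_image[OF inj_on_kernel_vector] by simp
qed

lemma parity_code_deep_hole:
  assumes "multiples (col ` {..<n}) \<noteq> UNIV"
  shows "\<exists>x\<in>words n. \<forall>c\<in>parity_code n col. 2 \<le> hamming_dist n x c"
proof -
  obtain z where z: "z \<notin> multiples (col ` {..<n})" using assms by auto
  have "2 \<le> hamming_dist n (embed_triple z) c" if c: "c \<in> parity_code n col" for c
  proof (rule ccontr)
    assume "\<not> 2 \<le> hamming_dist n (embed_triple z) c"
    then have "hamming_dist n (embed_triple z) c \<le> 1" by simp
    then obtain i where i: "\<forall>l<n. l \<noteq> i \<longrightarrow> embed_triple z l = c l"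
      by (rule hamming_dist_le_Suc0_imp_single_support)
    define d where "d = embed_triple z - c"
    have "z = syndrome n col d"
      using c by (simp add: d_def parity_code_def syndrome_diff syndrome_embed_triple)
    also have "\<dots> = (if i < n then tscale (d i) (col i) else 0)"
      by (rule syndrome_single_support) (use i in \<open>simp add: d_def\<close>)
    finally have "z \<in> multiples (col ` {..<n})"
      using three_le zero_mem_multiples[of "col ` {..<n}"]
      by (auto intro: tscale_mem_multiples simp: lessThan_empty_iff split: if_splits)
    with z show False ..
  qed
  moreover have "embed_triple z \<in> words n"
    using three_le by (simp add: words_def embed_triple_def)
  ultimately show ?thesis by blast
qed

lemma parity_code_covering_radius_2:
  assumes "pair_combinations (col ` {..<n}) = UNIV" and "multiples (col ` {..<n}) \<noteq> UNIV"
  shows "linear_code n 3 (parity_code n col) \<and> has_covering_radius n (parity_code n col) 2"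
  unfolding linear_code_def has_covering_radius_def
  using three_le parity_code_subspace dim_parity_code parity_code_covering[OF assms(1)]
    parity_code_deep_hole[OF assms(2)]
  by (auto simp: parity_code_def)

end

lemma length_fun_le_card_columns:
  fixes S :: "'a::{field,finite} triple set" and F :: "'a itself"
  assumes "{(1, 0, 0), (0, 1, 0), (0, 0, 1)} \<subseteq> S"
    and "pair_combinations S = UNIV" and "multiples S \<noteq> UNIV"
  shows "length_fun F 2 3 \<le> card S"
proof -
  obtain xs where xs: "set xs = S - {(1, 0, 0), (0, 1, 0), (0, 0, 1)}" "distinct xs"
    using finite_distinct_list[of "S - {(1, 0, 0), (0, 1, 0), (0, 0, 1)}"] by auto
  define cols where "cols = (1, 0, 0) # (0, 1, 0) # (0, 0, 1) # xs"
  have set_cols: "set cols = S" and "distinct cols" using assms(1) xs by (auto simp: cols_def)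
  then have card: "length cols = card S" by (metis distinct_card)
  have S: "(!) cols ` {..<length cols} = S"
    using nth_image[of "length cols" cols] set_cols by (simp add: lessThan_atLeast0)
  interpret standard_columns "length cols" "(!) cols"
    by unfold_locales (simp_all add: cols_def)
  have "linear_code (length cols) 3 (parity_code (length cols) ((!) cols))
      \<and> has_covering_radius (length cols) (parity_code (length cols) ((!) cols)) 2"
    using parity_code_covering_radius_2 assms(2,3) by (simp add: S)
  then have "length_fun F 2 3 \<le> length cols"
    unfolding length_fun_def by (intro Least_le) blast
  then show ?thesis by (simp add: card)
qed

lemma card_nonzero: "card (UNIV - {0 :: 'a::{zero,finite}}) = CARD('a) - 1"
  by (simp add: card_Diff_subset)

lemma card_field_ge_2: "2 \<le> CARD('a::{field,finite})"
proof -
  have "card {0::'a, 1} \<le> CARD('a)" by (rule card_mono) auto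
  then show ?thesis by simp
qed

lemma card_nonzero_multiples:
  fixes u :: "'a::{field,finite} triple"
  assumes "u \<noteq> 0"
  shows "card ((\<lambda>c. tscale c u) ` (UNIV - {0})) = CARD('a) - 1"
  using card_image[OF inj_on_subset[OF inj_tscale_left[OF assms] subset_UNIV]] card_nonzero
  by simp

lemma card_uncovered_ge:
  fixes S :: "'a::{field,finite} triple set"
  assumes "z \<in> uncovered S" and "u \<in> S"
  shows "CARD('a) - 1 \<le> card (uncovered S)"
proof -
  have "z \<noteq> 0" using assms(1) zero_mem_pair_combinations[OF assms(2)] by (auto simp: uncovered_def)
  have "(\<lambda>c. tscale c z) ` (UNIV - {0}) \<subseteq> uncovered S"
    using tscale_mem_uncovered[OF assms(1)] by blast
  then have "card ((\<lambda>c. tscale c z) ` (UNIV - {0})) \<le> card (uncovered S)"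
    by (intro card_mono) auto
  then show ?thesis using card_nonzero_multiples[OF \<open>z \<noteq> 0\<close>] by simp
qed

lemma card_covering_points:
  fixes S :: "'a::{field,finite} triple set"
  assumes z: "z \<in> uncovered S"
  shows "(CARD('a) - 1) * card (multiples S) \<le> card {p. z \<in> pair_combinations (insert p S)}"
proof -
  define f where "f = (\<lambda>(a, w). tscale a z + w)"
  have "f ` ((UNIV - {0}) \<times> multiples S) \<subseteq> {p. z \<in> pair_combinations (insert p S)}"
  proof (rule image_subsetI)
    fix x assume "x \<in> (UNIV - {0 :: 'a}) \<times> multiples S"
    then obtain a w where x: "x = (a, w)" and "a \<noteq> 0" "w \<in> multiples S" by blast
    then obtain b u where "u \<in> S" and w: "w = tscale b u" unfolding multiples_def by blast
    have "z = tscale (1 / a) (f x) + tscale (- b / a) u"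
      using \<open>a \<noteq> 0\<close> by (simp add: f_def x w tscale_add_right tscale_tscale tscale_uminus_left)
    then show "f x \<in> {p. z \<in> pair_combinations (insert p S)}"
      using \<open>u \<in> S\<close> unfolding pair_combinations_def by blast
  qed
  then have "card (f ` ((UNIV - {0}) \<times> multiples S)) \<le> card {p. z \<in> pair_combinations (insert p S)}"
    by (intro card_mono) auto
  then show ?thesis
    using inj_on_tscale_plus_multiples[OF z]
    by (simp add: f_def card_image card_cartesian_product card_nonzero)
qed

lemma exists_ge_mult_card:
  fixes f :: "'a \<Rightarrow> nat"
  assumes "finite A" "A \<noteq> {}" "M \<le> sum f A"
  shows "\<exists>p\<in>A. M \<le> f p * card A"
proof (rule ccontr)
  assume "\<not> (\<exists>p\<in>A. M \<le> f p * card A)"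
  then have "(\<Sum>p\<in>A. f p * card A) < (\<Sum>p\<in>A. M)"
    using assms(1,2) by (intro sum_strict_mono) auto
  then have "sum f A * card A < card A * M" by (simp add: sum_distrib_right)
  with assms(3) show False by (metis mult.commute mult_le_mono1 not_le)
qed

text \<open>Averaging over all q^3 candidates p: each uncovered z is newly covered by at least
  (q - 1) |multiples S| of them.\<close>

lemma greedy_step:
  fixes S :: "'a::{field,finite} triple set"
  shows "\<exists>p. card (uncovered (insert p S)) * CARD('a) ^ 3
           + card (uncovered S) * ((CARD('a) - 1) * card (multiples S))
         \<le> card (uncovered S) * CARD('a) ^ 3"
proof -
  define N where "N = CARD('a) ^ 3"
  define M where "M = card (uncovered S) * ((CARD('a) - 1) * card (multiples S))"
  define D where "D p = {z \<in> uncovered S. z \<in> pair_combinations (insert p S)}" for p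
  have card_D: "card (uncovered (insert p S)) + card (D p) = card (uncovered S)" for p
  proof -
    have "uncovered (insert p S) = uncovered S - D p"
      using pair_combinations_mono[of S "insert p S"] by (auto simp: uncovered_def D_def)
    moreover have "D p \<subseteq> uncovered S" by (auto simp: D_def)
    ultimately show ?thesis by (simp add: card_Diff_subset card_mono)
  qed
  have "M \<le> (\<Sum>z\<in>uncovered S. card {p. z \<in> pair_combinations (insert p S)})"
    unfolding M_def using card_covering_points[of _ S]
    by (simp add: sum_mono[of "uncovered S" "\<lambda>_. (CARD('a) - 1) * card (multiples S)", simplified])
  also have "\<dots> = (\<Sum>z\<in>uncovered S. \<Sum>p\<in>UNIV. if z \<in> pair_combinations (insert p S) then 1 else 0)"
    by (simp add: sum.If_cases)
  also have "\<dots> = (\<Sum>p\<in>UNIV. \<Sum>z\<in>uncovered S. if z \<in> pair_combinations (insert p S) then 1 else 0)"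
    by (rule sum.swap)
  also have "\<dots> = (\<Sum>p\<in>UNIV. card (D p))"
    by (simp add: D_def sum.If_cases Int_def)
  finally have "M \<le> (\<Sum>p\<in>UNIV. card (D p))" .
  then have "\<exists>p\<in>UNIV. M \<le> card (D p) * CARD('a triple)"
    by (intro exists_ge_mult_card) auto
  then obtain p where p: "M \<le> card (D p) * N" by (auto simp: N_def power3_eq_cube mult.assoc)
  have "card (uncovered (insert p S)) * N + M \<le> card (uncovered (insert p S)) * N + card (D p) * N"
    using p by simp
  also have "\<dots> = card (uncovered S) * N"
    using card_D[of p] by (metis add_mult_distrib)
  finally show ?thesis unfolding N_def M_def by blast
qed

lemma card_multiples_insert:
  fixes S :: "'a::{field,finite} triple set"
  assumes "u \<in> S" and p: "p \<notin> multiples S"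
  shows "card (multiples S) + (CARD('a) - 1) \<le> card (multiples (insert p S))"
proof -
  have "p \<noteq> 0" using p zero_mem_multiples[of S] assms(1) by auto
  have "multiples S \<inter> (\<lambda>c. tscale c p) ` (UNIV - {0}) = {}"
    using p tscale_mem_multiples_iff by blast
  moreover have "multiples S \<union> (\<lambda>c. tscale c p) ` (UNIV - {0}) \<subseteq> multiples (insert p S)"
    unfolding multiples_def by blast
  then have "card (multiples S \<union> (\<lambda>c. tscale c p) ` (UNIV - {0})) \<le> card (multiples (insert p S))"
    by (intro card_mono) auto
  ultimately show ?thesis
    using card_nonzero_multiples[OF \<open>p \<noteq> 0\<close>] by (simp add: card_Un_disjoint)
qed

lemma card_multiples_le:
  fixes S :: "'a::{field,finite} triple set"
  shows "card (multiples S) \<le> 1 + card S * (CARD('a) - 1)"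
proof -
  have "multiples S \<subseteq> insert 0 (\<Union>u\<in>S. (\<lambda>c. tscale c u) ` (UNIV - {0}))"
  proof
    fix v assume "v \<in> multiples S"
    then obtain c u where "u \<in> S" "v = tscale c u" unfolding multiples_def by blast
    then show "v \<in> insert 0 (\<Union>u\<in>S. (\<lambda>c. tscale c u) ` (UNIV - {0}))"
      by (cases "c = 0") auto
  qed
  then have "card (multiples S) \<le> card (insert 0 (\<Union>u\<in>S. (\<lambda>c. tscale c u) ` (UNIV - {0::'a})))"
    by (intro card_mono) auto
  also have "\<dots> \<le> 1 + card (\<Union>u\<in>S. (\<lambda>c. tscale c u) ` (UNIV - {0::'a}))"
    by (simp add: card_insert_if)
  also have "card (\<Union>u\<in>S. (\<lambda>c. tscale c u) ` (UNIV - {0::'a}))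
      \<le> (\<Sum>u\<in>S. card ((\<lambda>c. tscale c u) ` (UNIV - {0::'a})))"
    by (rule card_UN_le) simp
  also have "\<dots> \<le> (\<Sum>u\<in>S. card (UNIV - {0::'a}))"
    by (intro sum_mono card_image_le) simp
  finally show ?thesis by (simp add: card_nonzero)
qed

definition unit_vectors :: "'a::field triple set" where
  "unit_vectors = {(1, 0, 0), (0, 1, 0), (0, 0, 1)}"

lemma card_unit_vectors: "card (unit_vectors :: 'a::field triple set) = 3"
  by (simp add: unit_vectors_def)

lemma card_uncovered_unit_vectors:
  "card (uncovered (unit_vectors :: 'a::{field,finite} triple set)) \<le> (CARD('a) - 1) ^ 3"
proof -
  have "(a, b, c) \<in> pair_combinations unit_vectors" if "a = 0 \<or> b = 0 \<or> c = 0" for a b c :: 'a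
  proof -
    have "(0, b, c) = tscale b (0, 1, 0) + tscale c (0, 0, 1)"
      and "(a, 0, c) = tscale a (1, 0, 0) + tscale c (0, 0, 1)"
      and "(a, b, 0) = tscale a (1, 0, 0) + tscale b (0, 1, 0)" by simp_all
    with that show ?thesis unfolding pair_combinations_def unit_vectors_def by blast
  qed
  then have "uncovered (unit_vectors :: 'a triple set) \<subseteq> (UNIV - {0}) \<times> (UNIV - {0}) \<times> (UNIV - {0})"
    by (auto simp: uncovered_def)
  then have "card (uncovered (unit_vectors :: 'a triple set))
      \<le> card ((UNIV - {0::'a}) \<times> (UNIV - {0::'a}) \<times> (UNIV - {0::'a}))"
    by (intro card_mono) auto
  also have "\<dots> = (CARD('a) - 1) ^ 3"
    by (simp only: card_cartesian_product card_nonzero) (simp add: power3_eq_cube)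
  finally show ?thesis .
qed

lemma card_multiples_unit_vectors:
  "1 + 3 * (CARD('a) - 1) \<le> card (multiples (unit_vectors :: 'a::{field,finite} triple set))"
proof -
  have "(\<lambda>c. tscale c (0::'a, 0::'a, 1::'a)) ` UNIV \<subseteq> multiples {(0, 0, 1)}"
    unfolding multiples_def by blast
  then have "card ((\<lambda>c. tscale c (0::'a, 0::'a, 1::'a)) ` UNIV)
      \<le> card (multiples {(0::'a, 0::'a, 1::'a)})"
    by (intro card_mono) auto
  then have "CARD('a) \<le> card (multiples {(0::'a, 0::'a, 1::'a)})"
    using card_image[OF inj_tscale_left[of "(0::'a, 0::'a, 1::'a)"]] by (simp add: zero_triple)
  moreover have "card (multiples {(0::'a, 0::'a, 1::'a)}) + (CARD('a) - 1)
      \<le> card (multiples {(0::'a, 1::'a, 0::'a), (0, 0, 1)})"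
    by (rule card_multiples_insert) (auto simp: multiples_def)
  moreover have "card (multiples {(0::'a, 1::'a, 0::'a), (0, 0, 1)}) + (CARD('a) - 1)
      \<le> card (multiples {(1::'a, 0::'a, 0::'a), (0, 1, 0), (0, 0, 1)})"
    by (rule card_multiples_insert[of "(0, 0, 1)"]) (auto simp: multiples_def)
  ultimately show ?thesis
    using card_field_ge_2[where 'a='a] by (simp add: unit_vectors_def)
qed

section \<open>The greedy construction\<close>

definition greedy_factor :: "real \<Rightarrow> nat \<Rightarrow> real" where
  "greedy_factor q j = max 0 (1 - (q - 1) * (1 + real j * (q - 1)) / q ^ 3)"

definition uncovered_bound :: "real \<Rightarrow> nat \<Rightarrow> real" where
  "uncovered_bound q k = (q - 1) ^ 3 * (\<Prod>j\<in>{3..<k}. greedy_factor q j)"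

lemma uncovered_bound_nonneg: "1 \<le> q \<Longrightarrow> 0 \<le> uncovered_bound q k"
  unfolding uncovered_bound_def greedy_factor_def by (intro mult_nonneg_nonneg prod_nonneg) auto

lemma uncovered_bound_Suc:
  "3 \<le> k \<Longrightarrow> uncovered_bound q (Suc k) = uncovered_bound q k * greedy_factor q k"
  by (simp add: uncovered_bound_def prod.atLeastLessThan_Suc mult.assoc)

lemma le_mult_greedy_factor:
  fixes c c' q L k :: nat
  assumes step: "c' * q ^ 3 + c * ((q - 1) * L) \<le> c * q ^ 3"
    and L: "1 + k * (q - 1) \<le> L" and q: "1 \<le> q"
  shows "real c' \<le> real c * greedy_factor q k"
proof -
  define x where "x = (real q - 1) * (1 + real k * (real q - 1))"
  have q3: "0 < real q ^ 3" using q by simp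
  have "real (c' * q ^ 3 + c * ((q - 1) * L)) \<le> real (c * q ^ 3)"
    using step by (simp only: of_nat_le_iff)
  then have step': "real c' * real q ^ 3 + real c * ((real q - 1) * real L) \<le> real c * real q ^ 3"
    using q by (simp add: of_nat_diff)
  have "real (1 + k * (q - 1)) \<le> real L" using L by (simp only: of_nat_le_iff)
  then have "real c * x \<le> real c * ((real q - 1) * real L)"
    using q unfolding x_def by (intro mult_left_mono) (simp_all add: of_nat_diff)
  then have "real c' * real q ^ 3 \<le> real c * real q ^ 3 - real c * x"
    using step' by linarith
  then have "real c' \<le> (real c * real q ^ 3 - real c * x) / real q ^ 3"
    using q3 by (simp add: le_divide_eq)
  also have "\<dots> = real c * (1 - x / real q ^ 3)"
    using q3 by (simp add: field_simps)
  also have "\<dots> \<le> real c * greedy_factor q k"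
    unfolding greedy_factor_def x_def by (intro mult_left_mono) auto
  finally show ?thesis .
qed

lemma greedy_extend:
  fixes S :: "'a::{field,finite} triple set"
  assumes "u \<in> S" and "uncovered S \<noteq> {}" and mult_S: "1 + k * (CARD('a) - 1) \<le> card (multiples S)"
  obtains p where "p \<notin> S" and "1 + Suc k * (CARD('a) - 1) \<le> card (multiples (insert p S))"
    and "card (uncovered (insert p S)) \<le> card (uncovered S) * greedy_factor CARD('a) k"
proof -
  define q where "q = CARD('a)"
  have q: "2 \<le> q" using card_field_ge_2 by (simp add: q_def)
  obtain p where p: "card (uncovered (insert p S)) * q ^ 3
      + card (uncovered S) * ((q - 1) * card (multiples S)) \<le> card (uncovered S) * q ^ 3"
    using greedy_step[of S] by (auto simp: q_def)
  have p_new: "p \<notin> multiples S"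
  proof
    assume "p \<in> multiples S"
    then have "card (uncovered (insert p S)) = card (uncovered S)"
      by (simp add: uncovered_def pair_combinations_insert_multiple)
    moreover have "0 < card (uncovered S) * ((q - 1) * card (multiples S))"
      using assms(2) mult_S q by (auto simp: q_def)
    ultimately show False using p by (metis add_le_same_cancel1 not_le)
  qed
  show thesis
  proof (rule that)
    show "p \<notin> S" using p_new subset_multiples by blast
    show "1 + Suc k * (CARD('a) - 1) \<le> card (multiples (insert p S))"
      using card_multiples_insert[OF assms(1) p_new] mult_S by simp
    show "card (uncovered (insert p S)) \<le> card (uncovered S) * greedy_factor CARD('a) k"
      using le_mult_greedy_factor[OF p] mult_S q by (simp add: q_def)
  qed
qed

lemma greedy_iteration:
  assumes "3 \<le> k"
  shows "\<exists>S :: 'a::{field,finite} triple set. unit_vectors \<subseteq> S \<and> card S \<le> k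
           \<and> card (uncovered S) \<le> uncovered_bound CARD('a) k
           \<and> (uncovered S \<noteq> {} \<longrightarrow> card S = k \<and> 1 + k * (CARD('a) - 1) \<le> card (multiples S))"
  using assms
proof (induction k rule: nat_induct_at_least)
  case base
  have "real (card (uncovered (unit_vectors :: 'a triple set))) \<le> real ((CARD('a) - 1) ^ 3)"
    using card_uncovered_unit_vectors by (simp only: of_nat_le_iff)
  also have "\<dots> = uncovered_bound CARD('a) 3"
    using card_field_ge_2[where 'a='a] by (simp add: uncovered_bound_def of_nat_diff)
  finally show ?case
    using card_unit_vectors card_multiples_unit_vectors by (intro exI[of _ unit_vectors]) auto
next
  case (Suc k)
  define q where "q = CARD('a)"
  have q: "1 \<le> q" using card_field_ge_2[where 'a='a] by (simp add: q_def)
  from Suc.IH obtain S :: "'a triple set" where S: "unit_vectors \<subseteq> S" "card S \<le> k"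
    "card (uncovered S) \<le> uncovered_bound q k"
    "uncovered S \<noteq> {} \<longrightarrow> card S = k \<and> 1 + k * (q - 1) \<le> card (multiples S)"
    by (auto simp: q_def)
  show ?case
  proof (cases "uncovered S = {}")
    case True
    then show ?thesis
      using S uncovered_bound_nonneg[of "real q" "Suc k"] q
      by (intro exI[of _ S]) (auto simp: q_def)
  next
    case False
    with S have card_S: "card S = k" and mult_S: "1 + k * (q - 1) \<le> card (multiples S)" by auto
    have "(1, 0, 0) \<in> S" using S(1) by (simp add: unit_vectors_def)
    then obtain p where "p \<notin> S" and mult: "1 + Suc k * (q - 1) \<le> card (multiples (insert p S))"
      and unc: "card (uncovered (insert p S)) \<le> card (uncovered S) * greedy_factor q k"
      using greedy_extend False mult_S unfolding q_def by blast
    note unc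
    also have "card (uncovered S) * greedy_factor q k \<le> uncovered_bound q k * greedy_factor q k"
      using S(3) by (intro mult_right_mono) (simp_all add: greedy_factor_def)
    also have "\<dots> = uncovered_bound q (Suc k)"
      using Suc.hyps by (simp add: uncovered_bound_Suc)
    finally show ?thesis
      using S(1) card_S mult \<open>p \<notin> S\<close> by (intro exI[of _ "insert p S"]) (auto simp: q_def)
  qed
qed

text \<open>After k greedy steps fewer than q - 1 vectors are uncovered, so none is (uncovered vectors
  come with all their q - 1 nonzero multiples), while the at most 1 + k (q - 1) multiples of the
  columns do not fill the whole space.\<close>

definition greedy_admissible :: "nat \<Rightarrow> nat \<Rightarrow> bool" where
  "greedy_admissible q k \<longleftrightarrow>
     3 \<le> k \<and> uncovered_bound (real q) k < real q - 1 \<and> 1 + k * (q - 1) < q ^ 3"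

lemma length_fun_le_if_greedy_admissible:
  fixes F :: "'a::{field,finite} itself"
  assumes "greedy_admissible CARD('a) k"
  shows "length_fun F 2 3 \<le> k"
proof -
  have "3 \<le> k" using assms by (simp add: greedy_admissible_def)
  then obtain S :: "'a triple set" where S: "unit_vectors \<subseteq> S" "card S \<le> k"
      "card (uncovered S) \<le> uncovered_bound CARD('a) k"
    using greedy_iteration by blast
  have "(1, 0, 0) \<in> S" using S(1) by (simp add: unit_vectors_def)
  have "uncovered S = {}"
  proof (rule ccontr)
    assume "uncovered S \<noteq> {}"
    then have "CARD('a) - 1 \<le> card (uncovered S)"
      using card_uncovered_ge[OF _ \<open>(1, 0, 0) \<in> S\<close>] by blast
    then have "real CARD('a) - 1 \<le> card (uncovered S)"
      using card_field_ge_2[where 'a='a] by (simp add: of_nat_diff flip: of_nat_le_iff)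
    then show False using S(3) assms by (simp add: greedy_admissible_def)
  qed
  moreover have "card (multiples S) < CARD('a triple)"
  proof -
    have "card (multiples S) \<le> 1 + k * (CARD('a) - 1)"
      using card_multiples_le[of S] mult_le_mono1[OF S(2), of "CARD('a) - 1"] by linarith
    also have "\<dots> < CARD('a triple)"
      using assms by (simp add: greedy_admissible_def power3_eq_cube)
    finally show ?thesis .
  qed
  then have "multiples S \<noteq> UNIV" by auto
  ultimately have "length_fun F 2 3 \<le> card S"
    using S(1) by (intro length_fun_le_card_columns) (auto simp: uncovered_def unit_vectors_def)
  with S(2) show ?thesis by simp
qed

section \<open>Choosing the number of steps\<close>

definition greedy_exponent :: "real \<Rightarrow> nat \<Rightarrow> real" where
  "greedy_exponent q j = (q - 1) * (1 + real j * (q - 1)) / q ^ 3"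

lemma greedy_factor_le_exp: "greedy_factor q j \<le> exp (- greedy_exponent q j)"
  unfolding greedy_factor_def greedy_exponent_def
  using exp_ge_add_one_self[of "- ((q - 1) * (1 + real j * (q - 1)) / q ^ 3)"] by auto

lemma uncovered_bound_le_exp:
  "1 \<le> q \<Longrightarrow> uncovered_bound q k \<le> (q - 1) ^ 3 * exp (- (\<Sum>j\<in>{3..<k}. greedy_exponent q j))"
proof -
  assume q: "1 \<le> q"
  have "(\<Prod>j\<in>{3..<k}. greedy_factor q j) \<le> (\<Prod>j\<in>{3..<k}. exp (- greedy_exponent q j))"
    by (intro prod_mono conjI greedy_factor_le_exp) (auto simp: greedy_factor_def)
  also have "\<dots> = exp (- (\<Sum>j\<in>{3..<k}. greedy_exponent q j))"
    by (simp add: exp_sum[symmetric] sum_negf)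
  finally show ?thesis unfolding uncovered_bound_def using q by (intro mult_left_mono) auto
qed

lemma uncovered_bound_lt:
  assumes "1 < q" and "2 * ln (q - 1) < (\<Sum>j\<in>{3..<k}. greedy_exponent q j)"
  shows "uncovered_bound q k < q - 1"
proof -
  have "uncovered_bound q k \<le> (q - 1) ^ 3 * exp (- (\<Sum>j\<in>{3..<k}. greedy_exponent q j))"
    using assms(1) by (intro uncovered_bound_le_exp) simp
  also have "\<dots> < (q - 1) ^ 3 * exp (- (2 * ln (q - 1)))"
    using assms by (intro mult_strict_left_mono) simp_all
  also have "exp (- (2 * ln (q - 1))) = 1 / (q - 1) ^ 2"
    using assms(1) by (simp add: exp_minus exp_double inverse_eq_divide)
  also have "(q - 1) ^ 3 * (1 / (q - 1) ^ 2) = q - 1"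
    using assms(1) by (simp add: power3_eq_cube power2_eq_square)
  finally show ?thesis .
qed

lemma sum_greedy_exponent:
  "3 \<le> k \<Longrightarrow> (\<Sum>j\<in>{3..<k}. greedy_exponent q j)
     = (q - 1) / q ^ 3 * ((real k - 3) + (q - 1) * (real k * (real k - 1) - 6) / 2)"
proof (induction k rule: nat_induct_at_least)
  case (Suc k)
  have "(\<Sum>j\<in>{3..<Suc k}. greedy_exponent q j)
      = (\<Sum>j\<in>{3..<k}. greedy_exponent q j) + greedy_exponent q k"
    using Suc.hyps by simp
  also have "\<dots> = (q - 1) / q ^ 3
      * ((real (Suc k) - 3) + (q - 1) * (real (Suc k) * (real (Suc k) - 1) - 6) / 2)"
    unfolding Suc.IH by (cases "q = 0") (simp_all add: greedy_exponent_def field_simps)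
  finally show ?case .
qed simp

lemma ln_le_sqrt: "0 < y \<Longrightarrow> ln y \<le> sqrt y"
proof -
  assume y: "0 < y"
  define s where "s = sqrt y"
  have s0: "0 < s" using y by (simp add: s_def)
  have "ln (sqrt s) \<le> sqrt s - 1" using s0 by (intro ln_le_minus_one) simp
  moreover have "ln s = 2 * ln (sqrt s)" using s0 by (simp add: ln_sqrt)
  moreover have "ln y = 2 * ln s" using y by (simp add: s_def ln_sqrt)
  moreover have "4 * sqrt s - 4 \<le> s"
    using s0 zero_le_power2[of "sqrt s - 2"] by (simp add: power2_eq_square algebra_simps)
  ultimately show ?thesis by (simp add: s_def)
qed

lemma ln_minus_one_le: "1 < (q::real) \<Longrightarrow> ln (q - 1) \<le> ln (q + 1) - 2 / (q + 1)"
proof -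
  assume q: "1 < q"
  have "ln ((q - 1) / (q + 1)) \<le> (q - 1) / (q + 1) - 1" using q by (intro ln_le_minus_one) simp
  moreover have "ln ((q - 1) / (q + 1)) = ln (q - 1) - ln (q + 1)" using q by (simp add: ln_div)
  moreover have "(q - 1) / (q + 1) - 1 = - 2 / (q + 1)" using q by (simp add: field_simps)
  ultimately show ?thesis by simp
qed

text \<open>Via ln (q + 1) \<le> sqrt (q + 1), this is where the threshold q \<ge> 20 comes from.\<close>

lemma ln_times_square_le:
  fixes q :: real
  assumes "20 \<le> q"
  shows "4 * ln (q + 1) * (q ^ 2 + q - 1) ^ 2 \<le> (q + 1) * (q ^ 2 - 1) ^ 2"
proof -
  define s where "s = sqrt (q + 1)"
  define A where "A = q ^ 2 - 1"
  define B where "B = q ^ 2 + q - 1"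
  have "9 / 2 \<le> s" unfolding s_def using assms by (intro real_le_rsqrt) (simp add: power2_eq_square)
  have "0 < B" using assms zero_le_power2[of q] unfolding B_def by linarith
  have "20 * q \<le> q * q" using assms by (intro mult_right_mono) auto
  then have "17 * q + 1 \<le> q * q" using assms by linarith
  then have "17 * B \<le> 18 * A" unfolding A_def B_def power2_eq_square by (simp add: algebra_simps)
  then have "(17 * B) ^ 2 \<le> (18 * A) ^ 2" using \<open>0 < B\<close> by (intro power_mono) auto
  then have "289 * B ^ 2 \<le> 324 * A ^ 2" by (simp add: power_mult_distrib)
  then have "4 * B ^ 2 \<le> 9 / 2 * A ^ 2" using zero_le_power2[of A] by linarith
  also have "\<dots> \<le> s * A ^ 2" using \<open>9 / 2 \<le> s\<close> by (intro mult_right_mono) auto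
  finally have B_le: "4 * B ^ 2 \<le> s * A ^ 2" .
  have "4 * ln (q + 1) * B ^ 2 \<le> s * (4 * B ^ 2)"
    unfolding s_def using assms ln_le_sqrt[of "q + 1"] by (simp add: mult_right_mono)
  also have "\<dots> \<le> s * (s * A ^ 2)" using B_le assms by (intro mult_left_mono) (simp_all add: s_def)
  also have "\<dots> = (q + 1) * A ^ 2" using assms by (simp add: s_def flip: mult.assoc)
  finally show ?thesis by (simp add: A_def B_def)
qed

lemma two_ln_lt_greedy_exponent_sum:
  fixes q k :: real
  assumes q20: "20 \<le> q" and kB: "2 * sqrt ((q + 1) * ln (q + 1)) + 1 \<le> k"
  shows "2 * ln (q - 1) < (q - 1) / q ^ 3 * ((k - 3) + (q - 1) * (k * (k - 1) - 6) / 2)"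
proof -
  define L where "L = ln (q + 1)"
  define t where "t = sqrt ((q + 1) * L)"
  define A where "A = q ^ 2 - 1"
  define B where "B = q ^ 2 + q - 1"
  have L0: "0 < L" using q20 by (simp add: L_def)
  have t0: "0 \<le> t" using L0 q20 by (simp add: t_def)
  have tt: "t ^ 2 = (q + 1) * L" using L0 q20 by (simp add: t_def)
  have A0: "0 < A" using q20 by (simp add: A_def)
  have "(2 * L * B) ^ 2 \<le> (t * A) ^ 2"
  proof -
    have "L * (4 * L * B ^ 2) \<le> L * ((q + 1) * A ^ 2)"
      using ln_times_square_le[OF q20] L0
      by (intro mult_left_mono) (simp_all add: L_def A_def B_def)
    moreover have "(2 * L * B) ^ 2 = L * (4 * L * B ^ 2)" by algebra
    moreover have "(t * A) ^ 2 = L * ((q + 1) * A ^ 2)" using tt by algebra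
    ultimately show ?thesis by simp
  qed
  then have LB: "2 * L * B \<le> t * A"
    by (rule power2_le_imp_le) (use t0 A0 in simp)
  define G where "G = (2 * t - 2) + (q - 1) * ((2 * t + 1) * (2 * t) - 6) / 2"
  have "(q - 1) / q ^ 3 * G \<le> (q - 1) / q ^ 3 * ((k - 3) + (q - 1) * (k * (k - 1) - 6) / 2)"
  proof (rule mult_left_mono)
    have "2 * t + 1 \<le> k" using kB by (simp add: t_def L_def)
    then have "(2 * t + 1) * (2 * t) \<le> k * (k - 1)" using t0 by (intro mult_mono) auto
    then have "(q - 1) * ((2 * t + 1) * (2 * t) - 6) / 2 \<le> (q - 1) * (k * (k - 1) - 6) / 2"
      using q20 by (intro divide_right_mono mult_left_mono) auto
    moreover have "2 * t - 2 \<le> k - 3" using kB by (simp add: t_def L_def)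
    ultimately show "G \<le> (k - 3) + (q - 1) * (k * (k - 1) - 6) / 2" unfolding G_def by linarith
  qed (use q20 in auto)
  moreover have "2 * L - 4 / (q + 1) < (q - 1) / q ^ 3 * G"
  proof -
    have "G = 2 * t - 2 + (q - 1) * (2 * (q + 1) * L + t - 3)"
      unfolding G_def using tt by algebra
    then have ident: "A * G + 4 * q ^ 3 - 2 * L * q ^ 3 * (q + 1)
        = (q + 1) * (A * (t + 1) - 2 * L * B) + 4 * q"
      unfolding A_def B_def by algebra
    have "0 \<le> A * (t + 1) - 2 * L * B" using LB A0 by (simp add: algebra_simps)
    then have "0 \<le> (q + 1) * (A * (t + 1) - 2 * L * B)" using q20 by simp
    then have pos: "0 < A * G + 4 * q ^ 3 - 2 * L * q ^ 3 * (q + 1)"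
      unfolding ident using q20 by simp
    have "(2 * L - 4 / (q + 1)) * (q ^ 3 * (q + 1)) = 2 * L * q ^ 3 * (q + 1) - 4 * q ^ 3"
      using q20 by (simp add: field_simps)
    also have "\<dots> < A * G" using pos by simp
    also have "A * G = ((q - 1) / q ^ 3 * G) * (q ^ 3 * (q + 1))"
      using q20 by (simp add: A_def field_simps power2_eq_square)
    finally show ?thesis using q20 by (simp only: mult_less_cancel_right) simp
  qed
  moreover have "ln (q - 1) \<le> L - 2 / (q + 1)" using q20 ln_minus_one_le by (simp add: L_def)
  ultimately show ?thesis by linarith
qed

lemma one_plus_mult_lt_cube: "20 \<le> (x::real) \<Longrightarrow> 1 + (2 * x + 4) * (x - 1) < x ^ 3"
proof -
  assume x: "20 \<le> x"
  have "20 * (x * x) \<le> x * (x * x)" and "20 * x \<le> x * x" using x by (intro mult_right_mono; simp)+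
  moreover have "1 + (2 * x + 4) * (x - 1) = 2 * (x * x) + 2 * x - 3" and "x ^ 3 = x * (x * x)"
    by algebra+
  ultimately show ?thesis using x by linarith
qed

lemma greedy_admissible_large:
  fixes q :: nat
  assumes q20: "20 \<le> q"
  shows "greedy_admissible q (nat \<lfloor>2 * sqrt ((real q + 1) * ln (real q + 1)) + 2\<rfloor>)"
proof -
  define Q where "Q = real q"
  define L where "L = ln (Q + 1)"
  define t where "t = sqrt ((Q + 1) * L)"
  define k where "k = nat \<lfloor>2 * t + 2\<rfloor>"
  have Q20: "20 \<le> Q" using q20 by (simp add: Q_def)
  have "1 \<le> L" unfolding L_def using Q20 exp_le by (subst ln_ge_iff) auto
  have "L \<le> Q + 1" unfolding L_def using ln_le_minus_one[of "Q + 1"] Q20 by simp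
  have t2: "2 \<le> t"
  proof (unfold t_def, rule real_le_rsqrt)
    show "2 ^ 2 \<le> (Q + 1) * L" using \<open>1 \<le> L\<close> Q20 mult_mono[of 4 "Q + 1" 1 L] by simp
  qed
  have tQ: "t \<le> Q + 1"
  proof -
    have "(Q + 1) * L \<le> (Q + 1) ^ 2"
      using \<open>L \<le> Q + 1\<close> Q20 by (simp add: power2_eq_square mult_left_mono)
    then show ?thesis unfolding t_def using Q20 real_sqrt_le_mono by fastforce
  qed
  have k_le: "real k \<le> 2 * t + 2" and k_ge: "2 * t + 1 \<le> real k"
    using t2 real_of_int_floor_gt_diff_one[of "2 * t + 2"] by (simp_all add: k_def)
  have k3: "3 \<le> k" using k_ge t2 by linarith
  have "uncovered_bound Q k < Q - 1"
  proof (rule uncovered_bound_lt)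
    show "2 * ln (Q - 1) < (\<Sum>j\<in>{3..<k}. greedy_exponent Q j)"
      unfolding sum_greedy_exponent[OF k3]
      using two_ln_lt_greedy_exponent_sum[OF Q20] k_ge by (simp add: t_def L_def)
  qed (use Q20 in simp)
  moreover have "1 + k * (q - 1) < q ^ 3"
  proof -
    have "real k * (Q - 1) \<le> (2 * Q + 4) * (Q - 1)"
      using k_le tQ Q20 by (intro mult_right_mono) auto
    then have "1 + real k * (Q - 1) < Q ^ 3" using one_plus_mult_lt_cube[OF Q20] by linarith
    then have "real (1 + k * (q - 1)) < real (q ^ 3)" using q20 by (simp add: Q_def of_nat_diff)
    then show ?thesis by (simp only: of_nat_less_iff)
  qed
  ultimately show ?thesis
    using k3 by (simp add: greedy_admissible_def k_def t_def L_def Q_def)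
qed

lemma ln_ge_of_power_le:
  assumes x: "0 < x" and pow: "(3::real) ^ m \<le> x ^ n" and n: "0 < n"
  shows "real m / real n \<le> ln x"
proof -
  have "exp (real m / real n) ^ n = exp 1 ^ m"
    using n by (simp flip: exp_of_nat_mult)
  also have "\<dots> \<le> 3 ^ m" using exp_le by (intro power_mono) auto
  finally have "exp (real m / real n) ^ Suc (n - 1) \<le> x ^ Suc (n - 1)" using pow n by simp
  then have "exp (real m / real n) \<le> x" by (rule power_le_imp_le_base) (use x in simp)
  then show ?thesis using x by (simp add: ln_ge_iff)
qed

lemma greedy_admissible_within_bound:
  fixes q k m n :: nat
  assumes "greedy_admissible q k"
    and "(3::real) ^ m \<le> (real q + 1) ^ n" "0 < n"
    and "(real k - 2) ^ 2 \<le> 4 * (real q + 1) * (real m / real n)"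
  shows "\<exists>k. greedy_admissible q k \<and> real k \<le> 2 * sqrt ((real q + 1) * ln (real q + 1)) + 2"
proof -
  have "real m / real n \<le> ln (real q + 1)" using assms(2,3) by (intro ln_ge_of_power_le) auto
  then have "4 * (real q + 1) * (real m / real n) \<le> 4 * (real q + 1) * ln (real q + 1)"
    by (intro mult_left_mono) auto
  then have "(real k - 2) ^ 2 \<le> 4 * ((real q + 1) * ln (real q + 1))"
    using assms(4) by (simp only: mult.assoc)
  then have "real k - 2 \<le> sqrt (4 * ((real q + 1) * ln (real q + 1)))" by (rule real_le_rsqrt)
  then have "real k \<le> 2 * sqrt ((real q + 1) * ln (real q + 1)) + 2" by (simp add: real_sqrt_mult)
  with assms(1) show ?thesis by blast
qed

lemma uncovered_bound_list:
  "uncovered_bound q k = (q - 1) ^ 3 * prod_list (map (greedy_factor q) [3..<k])"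
  unfolding uncovered_bound_def by (simp add: prod.distinct_set_conv_list[symmetric])

text \<open>For q < 20 each entry (q, k, m, n) of the table gives a witness k, together with the
  lower bound m / n \<le> ln (q + 1) certified by 3 ^ m \<le> (q + 1) ^ n.\<close>

lemma exists_greedy_admissible:
  fixes q :: nat
  assumes "2 \<le> q"
  shows "\<exists>k. greedy_admissible q k \<and> real k \<le> 2 * sqrt ((real q + 1) * ln (real q + 1)) + 2"
proof (cases "20 \<le> q")
  case True
  define B where "B = 2 * sqrt ((real q + 1) * ln (real q + 1)) + 2"
  have "0 \<le> B" by (simp add: B_def)
  then have "real (nat \<lfloor>B\<rfloor>) \<le> B" by linarith
  with greedy_admissible_large[OF True] show ?thesis unfolding B_def by blast
next
  case False
  define table :: "(nat \<times> nat \<times> nat \<times> nat) list" where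
    "table = [(2, 4, 1, 1), (3, 5, 1, 1), (4, 6, 1, 1), (5, 7, 3, 2), (6, 7, 1, 1), (7, 8, 3, 2),
      (8, 9, 2, 1), (9, 9, 2, 1), (10, 10, 2, 1), (11, 11, 2, 1), (12, 11, 2, 1),
      (13, 12, 2, 1), (14, 12, 2, 1), (15, 13, 2, 1), (16, 13, 2, 1), (17, 14, 2, 1),
      (18, 14, 2, 1), (19, 15, 5, 2)]"
  have "q \<in> fst ` set table" using assms False by (simp add: table_def) presburger
  then obtain k m n where "(q, k, m, n) \<in> set table" by force
  moreover have "\<forall>(q, k, m, n) \<in> set table. greedy_admissible q k \<and> (3::real) ^ m \<le> (real q + 1) ^ n
      \<and> 0 < n \<and> (real k - 2) ^ 2 \<le> 4 * (real q + 1) * (real m / real n)"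
    by (simp add: table_def greedy_admissible_def uncovered_bound_list greedy_factor_def upt_rec)
  ultimately show ?thesis by (blast intro: greedy_admissible_within_bound)
qed

theorem corollary1:
  fixes F :: "'a::{field,finite} itself"
  shows "real (length_fun F 2 3)
           \<le> 2 * sqrt ((real (card (UNIV :: 'a set)) + 1) * ln (real (card (UNIV :: 'a set)) + 1)) + 2"
proof -
  obtain k where admissible: "greedy_admissible CARD('a) k"
    and k: "real k \<le> 2 * sqrt ((real CARD('a) + 1) * ln (real CARD('a) + 1)) + 2"
    using exists_greedy_admissible[OF card_field_ge_2] by blast
  have "length_fun F 2 3 \<le> k" using admissible by (rule length_fun_le_if_greedy_admissible)
  with k show ?thesis by simp
qed

end
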